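(* Let $s,k\geq 2$ and $n\geq ks+1$. For any reflection $\alpha$ of $[n]$, i.e., any permutation of $[n]$ of the form $x\mapsto c-x \pmod n$ for some fixed $c$ (residues modulo $n$ taken in $[n]$), the automorphism of $\operatorname{KG}(n,k)_{s-\operatorname{stab}}$ given by $\{i_1,\dots,i_k\}\mapsto\{\alpha(i_1),\dots,\alpha(i_k)\}$ is not a shift of $\operatorname{KG}(n,k)_{s-\operatorname{stab}}$.
   Context: For integers $s,k\geq 2$ and $n\geq ks$, a subset $S\subseteq[n]=\{1,\dots,n\}$ is $s$-stable if $s\leq |i-j|\leq n-s$ for all distinct $i,j\in S$. The $s$-stable Kneser graph $\operatorname{KG}(n,k)_{s-\operatorname{stab}}$ has as vertices the $s$-stable $k$-subsets of $[n]$, two vertices being adjacent iff they are disjoint. Every permutation of $[n]$ in the dihedral group $D_{2n}$ (symmetries of the $n$-cycle $1,2,\dots,n$) induces an automorphism of $\operatorname{KG}(n,k)_{s-\operatorname{stab}}$ by acting elementwise on vertices. A shift of a graph $G$ is an automorphism $\phi$ of $G$ such that $u$ and $\phi(u)$ are adjacent for every vertex $u$. *)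

theory Defs
  imports Main
begin

definition s_stable :: "nat \<Rightarrow> nat \<Rightarrow> nat set \<Rightarrow> bool" where
  "s_stable n s S \<longleftrightarrow> S \<subseteq> {1..n} \<and>
     (\<forall>i\<in>S. \<forall>j\<in>S. i \<noteq> j \<longrightarrow>
        int s \<le> \<bar>int i - int j\<bar> \<and> \<bar>int i - int j\<bar> \<le> int n - int s)"

definition stab_kneser_vertices :: "nat \<Rightarrow> nat \<Rightarrow> nat \<Rightarrow> nat set set" where
  "stab_kneser_vertices n k s = {S. s_stable n s S \<and> card S = k}"

definition stab_kneser_adj :: "nat \<Rightarrow> nat \<Rightarrow> nat \<Rightarrow> nat set \<Rightarrow> nat set \<Rightarrow> bool" where
  "stab_kneser_adj n k s u v \<longleftrightarrow>
     u \<in> stab_kneser_vertices n k s \<and> v \<in> stab_kneser_vertices n k s \<and> u \<inter> v = {}"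

definition graph_automorphism :: "'a set \<Rightarrow> ('a \<Rightarrow> 'a \<Rightarrow> bool) \<Rightarrow> ('a \<Rightarrow> 'a) \<Rightarrow> bool" where
  "graph_automorphism V E \<phi> \<longleftrightarrow> bij_betw \<phi> V V \<and>
     (\<forall>u\<in>V. \<forall>v\<in>V. E u v \<longleftrightarrow> E (\<phi> u) (\<phi> v))"

definition graph_shift :: "'a set \<Rightarrow> ('a \<Rightarrow> 'a \<Rightarrow> bool) \<Rightarrow> ('a \<Rightarrow> 'a) \<Rightarrow> bool" where
  "graph_shift V E \<phi> \<longleftrightarrow> graph_automorphism V E \<phi> \<and> (\<forall>u\<in>V. E u (\<phi> u))"

text \<open>The reflection x \<mapsto> c - x (mod n), residues taken in [n] = {1..n}.\<close>
definition reflection :: "nat \<Rightarrow> int \<Rightarrow> nat \<Rightarrow> nat" where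
  "reflection n c x = nat ((c - int x - 1) mod int n + 1)"

end

theory Submission
  imports Defs
begin

text \<open>A reflection x \<mapsto> c - x of \<int>/n\<int> preserves the cyclic distance of any two points, so it maps
  s-stable k-sets to s-stable k-sets; being an involution, it induces an automorphism of the
  stable Kneser graph. It is not a shift because some vertex meets its own image: choose an
  s-stable k-set containing two residues x, y with x + y \<equiv> c (or one residue x with 2x \<equiv> c), so
  that the reflection exchanges them. The two residues can be taken at distance 0 if c is even
  and at the odd distance d \<in> {s, s + 1} if c is odd; a translate of 0, d, d + s, \<dots>, d + (k - 2)s
  then does the job, since it still fits into a cycle of length n \<ge> ks + 1.\<close>

definition cyclic_sep :: "nat \<Rightarrow> nat \<Rightarrow> int \<Rightarrow> bool" where
  "cyclic_sep n s t \<longleftrightarrow> int s \<le> t mod int n \<and> t mod int n \<le> int n - int s"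

lemma cyclic_sep_mod [simp]: "cyclic_sep n s (t mod int n) = cyclic_sep n s t"
  by (simp add: cyclic_sep_def)

lemma cyclic_sep_uminus [simp]: "cyclic_sep n s (- t) = cyclic_sep n s t"
  by (auto simp: cyclic_sep_def zmod_zminus1_eq_if)

lemma cyclic_sep_zero_mod:
  assumes "s \<ge> 1" "t mod int n = 0"
  shows "\<not> cyclic_sep n s t"
  using assms by (simp add: cyclic_sep_def)

lemma cyclic_sep_if_abs_bounds:
  fixes t :: int
  assumes "s \<ge> 1" "int s \<le> \<bar>t\<bar>" "\<bar>t\<bar> \<le> int n - int s"
  shows "cyclic_sep n s t"
proof (cases "t \<ge> 0")
  case True
  then have "t mod int n = t" using assms by (intro mod_pos_pos_trivial) auto
  then show ?thesis using True assms by (simp add: cyclic_sep_def)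
next
  case False
  have "t mod int n = (t + int n) mod int n" by simp
  also have "\<dots> = t + int n" using assms False by (intro mod_pos_pos_trivial) auto
  finally show ?thesis using False assms by (auto simp: cyclic_sep_def)
qed

lemma abs_bounds_iff_cyclic_sep:
  fixes i j :: int
  assumes "s \<ge> 1" "1 \<le> i" "i \<le> int n" "1 \<le> j" "j \<le> int n"
  shows "(int s \<le> \<bar>i - j\<bar> \<and> \<bar>i - j\<bar> \<le> int n - int s) \<longleftrightarrow> cyclic_sep n s (i - j)"
proof (cases "i \<ge> j")
  case True
  then have "(i - j) mod int n = i - j" using assms by (intro mod_pos_pos_trivial) auto
  then show ?thesis using True by (simp add: cyclic_sep_def)
next
  case False
  have "(i - j) mod int n = (i - j + int n) mod int n" by simp
  also have "\<dots> = i - j + int n" using assms False by (intro mod_pos_pos_trivial) auto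
  finally show ?thesis using False by (auto simp: cyclic_sep_def)
qed

lemma s_stable_iff_cyclic_sep:
  assumes "s \<ge> 1"
  shows "s_stable n s S \<longleftrightarrow>
    S \<subseteq> {1..n} \<and> (\<forall>i\<in>S. \<forall>j\<in>S. i \<noteq> j \<longrightarrow> cyclic_sep n s (int i - int j))"
proof -
  have "(int s \<le> \<bar>int i - int j\<bar> \<and> \<bar>int i - int j\<bar> \<le> int n - int s) \<longleftrightarrow>
      cyclic_sep n s (int i - int j)" if "i \<in> {1..n}" "j \<in> {1..n}" for i j
    using assms that by (intro abs_bounds_iff_cyclic_sep) auto
  then show ?thesis unfolding s_stable_def by blast
qed

text \<open>Residue classes are represented in [n] = {1..n}, shifted by one: wrap n t \<equiv> t + 1 (mod n).\<close>
definition wrap :: "nat \<Rightarrow> int \<Rightarrow> nat" where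
  "wrap n t = nat (t mod int n + 1)"

lemma int_wrap: "n > 0 \<Longrightarrow> int (wrap n t) = t mod int n + 1"
  by (simp add: wrap_def)

lemma wrap_in_range:
  assumes "n > 0"
  shows "wrap n t \<in> {1..n}"
proof -
  have "0 \<le> t mod int n" "t mod int n < int n" using assms by auto
  then show ?thesis using int_wrap[OF assms, of t] by auto
qed

lemma wrap_cong: "t mod int n = t' mod int n \<Longrightarrow> wrap n t = wrap n t'"
  by (simp add: wrap_def)

lemma wrap_of_range: "x \<in> {1..n} \<Longrightarrow> wrap n (int x - 1) = x"
  by (auto simp: wrap_def mod_pos_pos_trivial)

lemma wrap_diff_mod:
  assumes "n > 0"
  shows "(int (wrap n t) - int (wrap n t')) mod int n = (t - t') mod int n"
  using assms by (simp add: int_wrap mod_diff_eq)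

lemma wrap_image_stab_kneser_vertex:
  assumes "n > 0" "s \<ge> 1" "card B = k"
    and sep: "\<And>b b'. b \<in> B \<Longrightarrow> b' \<in> B \<Longrightarrow> b \<noteq> b' \<Longrightarrow> cyclic_sep n s (b - b')"
  shows "wrap n ` B \<in> stab_kneser_vertices n k s"
proof -
  have image_sep: "cyclic_sep n s (int (wrap n b) - int (wrap n b'))"
    if "b \<in> B" "b' \<in> B" "b \<noteq> b'" for b b'
    using sep[OF that] wrap_diff_mod[OF \<open>n > 0\<close>] cyclic_sep_mod by metis
  have "inj_on (wrap n) B"
    using image_sep cyclic_sep_zero_mod[OF \<open>s \<ge> 1\<close>] by (force intro: inj_onI)
  then have "card (wrap n ` B) = k" using \<open>card B = k\<close> by (simp add: card_image)
  moreover have "s_stable n s (wrap n ` B)"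
    using wrap_in_range[OF \<open>n > 0\<close>] image_sep
    by (auto simp: s_stable_iff_cyclic_sep[OF \<open>s \<ge> 1\<close>])
  ultimately show ?thesis by (simp add: stab_kneser_vertices_def)
qed

lemma reflection_eq_wrap: "reflection n c x = wrap n (c - int x - 1)"
  by (simp add: reflection_def wrap_def)

lemma reflection_wrap:
  assumes "n > 0"
  shows "reflection n c (wrap n t) = wrap n (c - 2 - t)"
proof -
  have "(c - int (wrap n t) - 1) mod int n = (c - 2 - t mod int n) mod int n"
    using assms by (simp add: int_wrap algebra_simps)
  also have "\<dots> = (c - 2 - t) mod int n" by (simp add: mod_diff_right_eq)
  finally show ?thesis unfolding reflection_eq_wrap by (rule wrap_cong)
qed

lemma reflection_involutive:
  "n > 0 \<Longrightarrow> x \<in> {1..n} \<Longrightarrow> reflection n c (reflection n c x) = x"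
  by (simp add: reflection_eq_wrap[of n c x] reflection_wrap wrap_of_range)

lemma reflection_image_stab_kneser_vertex:
  assumes "n > 0" "s \<ge> 1" "u \<in> stab_kneser_vertices n k s"
  shows "reflection n c ` u \<in> stab_kneser_vertices n k s"
proof -
  have u: "s_stable n s u" "card u = k" using assms(3) by (auto simp: stab_kneser_vertices_def)
  let ?B = "(\<lambda>x. c - int x - 1) ` u"
  have "reflection n c ` u = wrap n ` ?B" by (simp add: reflection_eq_wrap image_image)
  moreover have "card ?B = k" using u(2) by (simp add: card_image inj_on_def)
  moreover have "cyclic_sep n s (b - b')" if bb': "b \<in> ?B" "b' \<in> ?B" "b \<noteq> b'" for b b'
  proof -
    obtain i j where ij: "i \<in> u" "j \<in> u" "b = c - int i - 1" "b' = c - int j - 1"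
      using bb'(1,2) by blast
    then have "cyclic_sep n s (int i - int j)"
      using u(1) bb'(3) by (auto simp: s_stable_iff_cyclic_sep[OF \<open>s \<ge> 1\<close>])
    moreover have "b - b' = - (int i - int j)" using ij by simp
    ultimately show ?thesis by (metis cyclic_sep_uminus)
  qed
  ultimately show ?thesis using wrap_image_stab_kneser_vertex[OF assms(1,2)] by metis
qed

lemma involution_image_automorphism:
  assumes invol: "\<And>x. x \<in> {1..n} \<Longrightarrow> \<phi> (\<phi> x) = x"
    and closed: "\<And>u. u \<in> stab_kneser_vertices n k s \<Longrightarrow> \<phi> ` u \<in> stab_kneser_vertices n k s"
  shows "graph_automorphism (stab_kneser_vertices n k s) (stab_kneser_adj n k s) (\<lambda>u. \<phi> ` u)"
proof -
  let ?V = "stab_kneser_vertices n k s"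
  have sub: "u \<subseteq> {1..n}" if "u \<in> ?V" for u
    using that by (auto simp: stab_kneser_vertices_def s_stable_def)
  have image_invol: "\<phi> ` \<phi> ` u = u" if "u \<in> ?V" for u
    using invol sub[OF that] by (force simp: image_image)
  have "inj_on \<phi> {1..n}" by (metis invol inj_onI)
  then have image_Int: "\<phi> ` (u \<inter> v) = \<phi> ` u \<inter> \<phi> ` v" if "u \<in> ?V" "v \<in> ?V" for u v
    using inj_on_image_Int sub that by metis
  have "bij_betw (\<lambda>u. \<phi> ` u) ?V ?V"
    by (rule bij_betw_byWitness[where f' = "\<lambda>u. \<phi> ` u"]) (use image_invol closed in auto)
  moreover have "stab_kneser_adj n k s u v \<longleftrightarrow> stab_kneser_adj n k s (\<phi> ` u) (\<phi> ` v)"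
    if "u \<in> ?V" "v \<in> ?V" for u v
    using that closed image_Int[OF that] by (auto simp: stab_kneser_adj_def)
  ultimately show ?thesis by (simp add: graph_automorphism_def)
qed

definition gapped_progression :: "nat \<Rightarrow> nat \<Rightarrow> int \<Rightarrow> int set" where
  "gapped_progression k s d = insert 0 ((\<lambda>j. d + int j * int s) ` {..<k - 1})"

lemma progression_ge_start:
  assumes "b \<in> (\<lambda>j. d + int j * int s) ` A"
  shows "d \<le> b"
proof -
  obtain j where "b = d + int j * int s" using assms by blast
  moreover have "0 \<le> int j * int s" by simp
  ultimately show ?thesis by linarith
qed

lemma card_gapped_progression:
  assumes "k \<ge> 1" "s \<ge> 1" "d > 0"
  shows "card (gapped_progression k s d) = k"
proof -
  have "0 \<notin> (\<lambda>j. d + int j * int s) ` {..<k - 1}"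
    using progression_ge_start[of 0 d s "{..<k - 1}"] assms(3) by linarith
  moreover have "inj_on (\<lambda>j. d + int j * int s) {..<k - 1}"
    using assms(2) by (auto simp: inj_on_def)
  ultimately show ?thesis using assms(1) by (simp add: gapped_progression_def card_image)
qed

lemma gapped_progression_bounds:
  assumes "d \<le> int s + 1" "d \<ge> 0" "b \<in> gapped_progression k s d"
  shows "0 \<le> b \<and> b \<le> int (k - 1) * int s + 1"
proof -
  consider "b = 0" | j where "j < k - 1" "b = d + int j * int s"
    using assms(3) unfolding gapped_progression_def by auto
  then show ?thesis
  proof cases
    case 2
    then have "(int j + 1) * int s \<le> int (k - 1) * int s" by (intro mult_right_mono) auto
    then show ?thesis using 2 assms(1,2) by (simp add: algebra_simps)
  qed simp
qed

lemma gapped_progression_sep: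
  assumes "int s \<le> d" "d \<le> int s + 1"
    and "b \<in> gapped_progression k s d" "b' \<in> gapped_progression k s d" "b \<noteq> b'"
  shows "int s \<le> \<bar>b - b'\<bar>"
proof -
  have from_zero: "int s \<le> \<bar>x - 0\<bar>" if "x \<in> gapped_progression k s d" "x \<noteq> 0" for x
  proof -
    have "x \<in> (\<lambda>j. d + int j * int s) ` {..<k - 1}"
      using that by (simp add: gapped_progression_def)
    then have "d \<le> x" by (rule progression_ge_start)
    then show ?thesis using assms(1) by simp
  qed
  show ?thesis
  proof (cases "b = 0 \<or> b' = 0")
    case True
    then show ?thesis
      using from_zero[of b] from_zero[of b'] assms(3-5) by (auto simp: abs_minus_commute)
  next
    case False
    then obtain j j' where "b = d + int j * int s" "b' = d + int j' * int s"
      using assms(3,4) unfolding gapped_progression_def by auto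
    then have "b - b' = (int j - int j') * int s" by (simp add: left_diff_distrib)
    moreover have "j \<noteq> j'" using assms(5) calculation by auto
    ultimately have "\<bar>b - b'\<bar> = \<bar>int j - int j'\<bar> * int s" "1 \<le> \<bar>int j - int j'\<bar>"
      by (auto simp: abs_mult)
    then show ?thesis by (simp add: mult_right_mono[of 1 _ "int s", simplified])
  qed
qed

lemma gapped_progression_cyclic_sep:
  assumes "s \<ge> 1" "k \<ge> 1" "n \<ge> k * s + 1" "int s \<le> d" "d \<le> int s + 1"
    and "b \<in> gapped_progression k s d" "b' \<in> gapped_progression k s d" "b \<noteq> b'"
  shows "cyclic_sep n s (b - b')"
proof (rule cyclic_sep_if_abs_bounds[OF assms(1)])
  show "int s \<le> \<bar>b - b'\<bar>" using gapped_progression_sep assms(4-8) .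
  have "int (k - 1) * int s + 1 \<le> int n - int s"
    using assms(2,3) of_nat_mono[OF assms(3)] by (simp add: of_nat_diff algebra_simps)
  then show "\<bar>b - b'\<bar> \<le> int n - int s"
    using gapped_progression_bounds[OF assms(5) _ assms(6)] gapped_progression_bounds[OF assms(5) _ assms(7)]
      assms(4) by fastforce
qed

lemma stab_kneser_vertex_meeting_reflection:
  assumes "s \<ge> 1" "k \<ge> 2" "n \<ge> k * s + 1"
  obtains u where "u \<in> stab_kneser_vertices n k s" "u \<inter> reflection n c ` u \<noteq> {}"
proof -
  have "n > 0" using assms(3) by simp
  define d :: int where "d = (if odd s then int s else int s + 1)"
  have d: "odd d" "int s \<le> d" "d \<le> int s + 1" unfolding d_def by auto
  let ?B = "gapped_progression k s d"
  define t :: int where "t = (if even c then 0 else d)"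
  have "t \<in> ?B" "0 \<in> ?B"
    using assms(2) by (auto simp: t_def gapped_progression_def image_iff intro: bexI[of _ 0])
  have "even (c - 2 - t)" using d(1) by (simp add: t_def)
  then obtain a where a: "c - 2 - t = 2 * a" by (elim evenE)
  let ?u = "wrap n ` (+) a ` ?B"
  have "card ((+) a ` ?B) = k"
    using card_gapped_progression[of k s d] assms(1,2) d by (simp add: card_image)
  then have "?u \<in> stab_kneser_vertices n k s"
    using gapped_progression_cyclic_sep[of s k n d] assms d
    by (intro wrap_image_stab_kneser_vertex[OF \<open>n > 0\<close> \<open>s \<ge> 1\<close>]) auto
  moreover have "reflection n c (wrap n (a + t)) = wrap n (a + 0)"
    using a by (simp add: reflection_wrap[OF \<open>n > 0\<close>] algebra_simps)
  then have "wrap n (a + 0) \<in> ?u \<inter> reflection n c ` ?u"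
    using \<open>t \<in> ?B\<close> \<open>0 \<in> ?B\<close> by (metis IntI image_eqI)
  ultimately show ?thesis using that by blast
qed

theorem mainTheorem8:
  fixes n k s :: nat and c :: int
  assumes "s \<ge> 2" and "k \<ge> 2" and "n \<ge> k * s + 1"
  shows "graph_automorphism (stab_kneser_vertices n k s) (stab_kneser_adj n k s)
           (\<lambda>u. reflection n c ` u)
       \<and> \<not> graph_shift (stab_kneser_vertices n k s) (stab_kneser_adj n k s)
           (\<lambda>u. reflection n c ` u)"
proof -
  have "n > 0" "s \<ge> 1" using assms by auto
  have "graph_automorphism (stab_kneser_vertices n k s) (stab_kneser_adj n k s)
      (\<lambda>u. reflection n c ` u)"
    using reflection_involutive[OF \<open>n > 0\<close>]
      reflection_image_stab_kneser_vertex[OF \<open>n > 0\<close> \<open>s \<ge> 1\<close>]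
    by (rule involution_image_automorphism)
  moreover obtain u where "u \<in> stab_kneser_vertices n k s" "u \<inter> reflection n c ` u \<noteq> {}"
    using stab_kneser_vertex_meeting_reflection \<open>s \<ge> 1\<close> assms(2,3) .
  then have "\<not> stab_kneser_adj n k s u (reflection n c ` u)"
    by (simp add: stab_kneser_adj_def)
  ultimately show ?thesis using \<open>u \<in> stab_kneser_vertices n k s\<close> by (auto simp: graph_shift_def)
qed

end
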